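(* Let $\mu_1\in(0,1)$ and $0<\varepsilon_2\le\frac12\mu_1$. Let $h(\mu_1,\varepsilon_2)=\ln\frac{(1-\mu_1+\varepsilon_2)\mu_1}{(1-\mu_1)(\mu_1-\varepsilon_2)}$ and $H=\frac{1}{(\mu_1-\varepsilon_2)(1-\mu_1+\varepsilon_2)h(\mu_1,\varepsilon_2)^2}$. Then \[ H\le\frac{2\dot\mu_1}{\varepsilon_2^2}+\frac{2}{\varepsilon_2},\qquad\text{where }\dot\mu_1=\mu_1(1-\mu_1). \] *)

theory Defs
  imports Complex_Main
begin

definition hfun :: "real \<Rightarrow> real \<Rightarrow> real" where
  "hfun \<mu>1 \<epsilon>2 = ln (((1 - \<mu>1 + \<epsilon>2) * \<mu>1) / ((1 - \<mu>1) * (\<mu>1 - \<epsilon>2)))"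

definition Hfun :: "real \<Rightarrow> real \<Rightarrow> real" where
  "Hfun \<mu>1 \<epsilon>2 = 1 / ((\<mu>1 - \<epsilon>2) * (1 - \<mu>1 + \<epsilon>2) * (hfun \<mu>1 \<epsilon>2)^2)"

end

theory Submission
  imports Defs
begin

text \<open>
  Write \<open>p = \<mu>\<^sub>1 - \<epsilon>\<^sub>2\<close> and \<open>q = 1 - \<mu>\<^sub>1 + \<epsilon>\<^sub>2\<close>, so that \<open>h = ln (\<mu>\<^sub>1 / p) + ln (q / (1 - \<mu>\<^sub>1))\<close>.
  Bounding each logarithm by \<open>ln (x / y) \<ge> (x - y) / x\<close> gives
  \<open>h \<ge> \<epsilon>\<^sub>2 / \<mu>\<^sub>1 + \<epsilon>\<^sub>2 / q \<ge> \<epsilon>\<^sub>2 / (\<mu>\<^sub>1 q)\<close>, hence \<open>H \<le> \<mu>\<^sub>1\<^sup>2 q / (p \<epsilon>\<^sub>2\<^sup>2)\<close>.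
  Since \<open>p \<ge> \<mu>\<^sub>1 / 2\<close>, this is at most \<open>2 \<mu>\<^sub>1 q / \<epsilon>\<^sub>2\<^sup>2 = 2 \<mu>\<^sub>1 (1 - \<mu>\<^sub>1) / \<epsilon>\<^sub>2\<^sup>2 + 2 \<mu>\<^sub>1 / \<epsilon>\<^sub>2\<close>.
\<close>

lemma diff_divide_le_ln_divide:
  fixes x y :: real
  assumes "0 < x" and "0 < y"
  shows "(x - y) / x \<le> ln (x / y)"
proof -
  have "ln (y / x) \<le> y / x - 1"
    using assms by (intro ln_le_minus_one) simp
  then show ?thesis
    using assms by (simp add: ln_div diff_divide_distrib)
qed

lemma hfun_ge:
  fixes \<mu> \<epsilon> :: real
  assumes "0 \<le> \<epsilon>" and "\<epsilon> < \<mu>" and "\<mu> < 1"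
  shows "\<epsilon> / (\<mu> * (1 - \<mu> + \<epsilon>)) \<le> hfun \<mu> \<epsilon>"
proof -
  define q where "q = 1 - \<mu> + \<epsilon>"
  have pos: "0 < \<mu>" "0 < \<mu> - \<epsilon>" "0 < 1 - \<mu>" "0 < q"
    using assms by (auto simp: q_def)
  have hfun_eq: "hfun \<mu> \<epsilon> = ln (\<mu> / (\<mu> - \<epsilon>)) + ln (q / (1 - \<mu>))"
    using pos by (simp add: hfun_def q_def ln_div ln_mult)
  have "\<epsilon> / (\<mu> * q) \<le> (\<epsilon> + \<epsilon>\<^sup>2) / (\<mu> * q)"
    using pos by (intro divide_right_mono) auto
  also have "\<dots> = \<epsilon> / \<mu> + \<epsilon> / q"
    using pos by (simp add: q_def field_simps power2_eq_square)
  also have "\<dots> \<le> ln (\<mu> / (\<mu> - \<epsilon>)) + ln (q / (1 - \<mu>))"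
    using diff_divide_le_ln_divide[of \<mu> "\<mu> - \<epsilon>"]
      diff_divide_le_ln_divide[of q "1 - \<mu>"] pos
    by (simp add: q_def)
  finally show ?thesis
    by (simp add: hfun_eq q_def)
qed

lemma Hfun_le:
  fixes \<mu> \<epsilon> :: real
  assumes "0 < \<epsilon>" and "\<epsilon> < \<mu>" and "\<mu> < 1"
  shows "Hfun \<mu> \<epsilon> \<le> \<mu>\<^sup>2 * (1 - \<mu> + \<epsilon>) / ((\<mu> - \<epsilon>) * \<epsilon>\<^sup>2)"
proof -
  define q where "q = 1 - \<mu> + \<epsilon>"
  define k where "k = \<epsilon> / (\<mu> * q)"
  have pos: "0 < \<mu> - \<epsilon>" "0 < q" "0 < k"
    using assms by (auto simp: q_def k_def)
  have "k\<^sup>2 \<le> (hfun \<mu> \<epsilon>)\<^sup>2"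
    using hfun_ge[of \<epsilon> \<mu>] assms pos(3) by (intro power_mono) (auto simp: k_def q_def)
  then have "Hfun \<mu> \<epsilon> \<le> 1 / ((\<mu> - \<epsilon>) * q * k\<^sup>2)"
    unfolding Hfun_def q_def[symmetric] using pos
    by (intro divide_left_mono mult_left_mono mult_pos_pos) auto
  also have "\<dots> = \<mu>\<^sup>2 * q / ((\<mu> - \<epsilon>) * \<epsilon>\<^sup>2)"
    using pos assms by (simp add: k_def field_simps power2_eq_square)
  finally show ?thesis
    by (simp add: q_def)
qed

theorem lemma15:
  fixes \<mu>1 \<epsilon>2 :: real
  assumes "0 < \<mu>1" and "\<mu>1 < 1"
    and "0 < \<epsilon>2" and "\<epsilon>2 \<le> \<mu>1 / 2"
  shows "Hfun \<mu>1 \<epsilon>2 \<le> 2 * (\<mu>1 * (1 - \<mu>1)) / \<epsilon>2^2 + 2 / \<epsilon>2"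
proof -
  define q where "q = 1 - \<mu>1 + \<epsilon>2"
  have "0 < q" and half: "\<mu>1 / 2 \<le> \<mu>1 - \<epsilon>2"
    using assms by (auto simp: q_def)
  have "Hfun \<mu>1 \<epsilon>2 \<le> \<mu>1\<^sup>2 * q / ((\<mu>1 - \<epsilon>2) * \<epsilon>2\<^sup>2)"
    using Hfun_le[of \<epsilon>2 \<mu>1] assms by (simp add: q_def)
  also have "\<dots> \<le> \<mu>1\<^sup>2 * q / (\<mu>1 / 2 * \<epsilon>2\<^sup>2)"
    using assms \<open>0 < q\<close> half
    by (intro divide_left_mono mult_right_mono mult_pos_pos) auto
  also have "\<dots> = 2 * (\<mu>1 * (1 - \<mu>1)) / \<epsilon>2^2 + 2 * \<mu>1 / \<epsilon>2"
    using assms by (simp add: q_def field_simps power2_eq_square)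
  also have "\<dots> \<le> 2 * (\<mu>1 * (1 - \<mu>1)) / \<epsilon>2^2 + 2 / \<epsilon>2"
    using assms by (simp add: divide_right_mono)
  finally show ?thesis .
qed

end
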